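(* Let $q$ be a prime power with $q=4m+1$ such that $-1\notin D_0^4$ (i.e. $-1$ is not a fourth power in $\mathbb{F}_q$). Let $a,b$ be the two distinct square roots of $-1$ in $\mathbb{F}_q$, and let $$M=\begin{pmatrix}1&-1&a&b\\ -1&1&b&a\\ b&a&1&-1\\ a&b&-1&1\end{pmatrix}.$$ Then the $4\times 4$ block matrix whose $(i,j)$ block is $C_{M_{ij}}$ is the adjacency matrix of a directed strongly regular graph with parameters $(4(4m+1),\ 4m,\ m,\ m-1,\ m)$.
   Context: Fix a primitive element $\gamma$ of $\mathbb{F}_q$; $D_i^e=\gamma^i\langle\gamma^e\rangle$ ($e\mid q-1$) are the cyclotomic classes, here with $e=4$. For $\sigma\in\mathbb{F}_q^*$, $C_\sigma$ is the $q\times q$ $0$-$1$ matrix with rows and columns indexed by $\mathbb{F}_q$ and $(C_\sigma)_{x,y}=1$ iff $x\in\sigma y+D_0^e$. A directed strongly regular graph with parameters $(v,k,t,\lambda,\mu)$ is a digraph (no loops, no multiple arcs) on $v$ vertices whose adjacency matrix $A$ satisfies $A^2=tI+\lambda A+\mu(J-I-A)$ and $AJ=JA=kJ$. *)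

theory Defs
  imports Main
begin

definition primitive_element :: "'a::{finite,field} \<Rightarrow> bool" where
  "primitive_element g \<longleftrightarrow> (\<forall>x. x \<noteq> 0 \<longrightarrow> (\<exists>k::nat. x = g ^ k))"

definition cyc_class :: "'a::{finite,field} \<Rightarrow> nat \<Rightarrow> nat \<Rightarrow> 'a set" where
  "cyc_class g e i = {g ^ i * (g ^ e) ^ k | k::nat. True}"

definition Cmat :: "'a::{finite,field} \<Rightarrow> nat \<Rightarrow> 'a \<Rightarrow> 'a \<Rightarrow> 'a \<Rightarrow> int" where
  "Cmat g e \<sigma> x y = (if x - \<sigma> * y \<in> cyc_class g e 0 then 1 else 0)"

definition Mmat :: "'a::field \<Rightarrow> 'a \<Rightarrow> nat \<Rightarrow> nat \<Rightarrow> 'a" where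
  "Mmat a b i j = [[1, -1, a, b], [-1, 1, b, a], [b, a, 1, -1], [a, b, -1, 1]] ! i ! j"

definition block_adj :: "'a::{finite,field} \<Rightarrow> 'a \<Rightarrow> 'a \<Rightarrow> (nat \<times> 'a) \<Rightarrow> (nat \<times> 'a) \<Rightarrow> int" where
  "block_adj g a b u w = Cmat g 4 (Mmat a b (fst u) (fst w)) (snd u) (snd w)"

definition dsrg :: "'v set \<Rightarrow> ('v \<Rightarrow> 'v \<Rightarrow> int) \<Rightarrow> int \<Rightarrow> int \<Rightarrow> int \<Rightarrow> int \<Rightarrow> int \<Rightarrow> bool" where
  "dsrg V A v k t lam mu \<longleftrightarrow>
     finite V \<and> int (card V) = v \<and>
     (\<forall>x\<in>V. \<forall>y\<in>V. A x y = 0 \<or> A x y = 1) \<and>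
     (\<forall>x\<in>V. A x x = 0) \<and>
     (\<forall>x\<in>V. \<forall>y\<in>V. (\<Sum>z\<in>V. A x z * A z y) =
        t * (if x = y then 1 else 0) + lam * A x y
        + mu * (1 - (if x = y then 1 else 0) - A x y)) \<and>
     (\<forall>x\<in>V. (\<Sum>z\<in>V. A x z) = k) \<and>
     (\<forall>y\<in>V. (\<Sum>z\<in>V. A z y) = k)"

end

theory Submission
  imports Defs
begin

text \<open>
  Write \<open>D = D\<^sub>0\<^sup>4\<close>. Since \<open>a\<^sup>2 = -1 \<notin> D\<close>, the elements \<open>c = (1, -1, a, b)\<close> (with \<open>b = -a\<close>)
  represent the four cosets of \<open>D\<close> in \<open>\<bbbF>\<^sub>q\<^sup>*\<close>, and \<open>M\<^sub>i\<^sub>j = c\<^sub>j / c\<^sub>i\<close>. In the square of the block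
  matrix, the entry at \<open>((i,x),(j,y))\<close> counts pairs \<open>(k,z)\<close> with \<open>x - (c\<^sub>k/c\<^sub>i) z \<in> D\<close> and
  \<open>z - (c\<^sub>j/c\<^sub>k) y \<in> D\<close>. Substituting \<open>d = x - (c\<^sub>k/c\<^sub>i) z\<close> turns this into counting \<open>d \<in> D\<close> and \<open>k\<close>
  with \<open>(t - d) c\<^sub>i / c\<^sub>k \<in> D\<close>, where \<open>t = x - (c\<^sub>j/c\<^sub>i) y\<close>; as \<open>c\<close> is a coset transversal, exactly one
  \<open>k\<close> works for each \<open>d \<noteq> t\<close>. So \<open>A\<^sup>2 = |D| J - A\<close>, which is the DSRG equation with
  \<open>t = \<mu> = |D| = m\<close> and \<open>\<lambda> = m - 1\<close>.
\<close>

lemma sum_UNIV_affine_reindex: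
  fixes f :: "'a::{finite,field} \<Rightarrow> 'b::comm_monoid_add"
  assumes "u \<noteq> 0"
  shows "(\<Sum>z\<in>UNIV. f (c + u * z)) = (\<Sum>z\<in>UNIV. f z)"
  by (rule sum.reindex_bij_witness[of _ "\<lambda>w. (w - c) / u" "\<lambda>z. c + u * z"]) (use assms in auto)

lemma sum_of_bool_affine_in:
  fixes D :: "'a::{finite,field} set"
  assumes "u \<noteq> 0"
  shows "(\<Sum>z\<in>UNIV. of_bool (c + u * z \<in> D)) = int (card D)"
  using sum_UNIV_affine_reindex[OF assms, of "\<lambda>w. of_bool (w \<in> D) :: int"] by simp

lemma nonzero_power_card_minus_one:
  fixes x :: "'a::{finite,field}"
  assumes "x \<noteq> 0"
  shows "x ^ (card (UNIV :: 'a set) - 1) = 1"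
proof -
  let ?U = "UNIV - {0::'a}"
  have "card ?U = card (UNIV :: 'a set) - 1"
    by (simp add: card_Diff_singleton)
  then have "x ^ (card (UNIV :: 'a set) - 1) * \<Prod>?U = (\<Prod>y\<in>?U. x * y)"
    by (simp add: prod.distrib)
  also have "\<dots> = \<Prod>?U"
    by (rule prod.reindex_bij_witness[of _ "\<lambda>y. y / x" "\<lambda>y. x * y"]) (use assms in auto)
  finally show ?thesis
    by simp
qed

lemma one_in_cyc_class: "1 \<in> cyc_class g e 0"
  by (auto simp: cyc_class_def intro: exI[of _ 0])

lemma zero_notin_cyc_class: "g \<noteq> 0 \<Longrightarrow> 0 \<notin> cyc_class g e 0"
  by (auto simp: cyc_class_def)

lemma cyc_class_mult: "x \<in> cyc_class g e 0 \<Longrightarrow> y \<in> cyc_class g e 0 \<Longrightarrow> x * y \<in> cyc_class g e 0"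
  by (auto simp: cyc_class_def power_add[symmetric])

lemma cyc_class_power:
  assumes "x \<in> cyc_class g e 0"
  shows "x ^ n \<in> cyc_class g e 0"
proof -
  obtain k where "x = (g ^ e) ^ k"
    using assms by (auto simp: cyc_class_def)
  then have "x ^ n = (g ^ e) ^ (k * n)"
    by (simp add: power_mult)
  then show ?thesis
    by (auto simp: cyc_class_def)
qed

lemma cyc_class_inverse:
  fixes g :: "'a::{finite,field}"
  assumes "x \<in> cyc_class g e 0"
  shows "inverse x \<in> cyc_class g e 0"
proof (cases "x = 0")
  case False
  have "card {0::'a, 1} \<le> card (UNIV :: 'a set)"
    by (rule card_mono) auto
  then have "Suc (card (UNIV :: 'a set) - 2) = card (UNIV :: 'a set) - 1"
    by simp
  then have "x * x ^ (card (UNIV :: 'a set) - 2) = 1"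
    using nonzero_power_card_minus_one[OF False] by (metis power_Suc)
  then have "inverse x = x ^ (card (UNIV :: 'a set) - 2)"
    using False by (simp add: field_simps)
  then show ?thesis
    using cyc_class_power[OF assms] by simp
qed (use assms in simp)

lemma cyc_class_divide:
  fixes g :: "'a::{finite,field}"
  shows "x \<in> cyc_class g e 0 \<Longrightarrow> y \<in> cyc_class g e 0 \<Longrightarrow> y / x \<in> cyc_class g e 0"
  by (simp add: divide_inverse cyc_class_mult cyc_class_inverse)

lemma power_ratio_in_cyc_class:
  fixes g :: "'a::{finite,field}"
  assumes "g \<noteq> 0" and "k mod e = l mod e"
  shows "g ^ l / g ^ k \<in> cyc_class g e 0"
proof -
  have split: "g ^ n = g ^ (n mod e) * (g ^ e) ^ (n div e)" for n :: nat
  proof -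
    have "g ^ n = g ^ (n mod e + e * (n div e))"
      by simp
    then show ?thesis
      by (simp only: power_add power_mult)
  qed
  have "g ^ l / g ^ k = (g ^ e) ^ (l div e) / (g ^ e) ^ (k div e)"
    using assms by (subst (1 2) split) simp
  also have "\<dots> \<in> cyc_class g e 0"
    by (rule cyc_class_divide) (auto simp: cyc_class_def)
  finally show ?thesis .
qed

text \<open>In \<open>\<bbbF>\<^sub>2\<close> even \<open>g = 0\<close> is primitive in this sense, hence the hypothesis \<open>-1 \<noteq> 1\<close>.\<close>

lemma primitive_element_nonzero:
  fixes g :: "'a::{finite,field}"
  assumes "primitive_element g" and "(-1::'a) \<noteq> 1"
  shows "g \<noteq> 0"
proof
  assume "g = 0"
  have "(-1::'a) \<noteq> 0"
    by simp
  then obtain k where "(-1::'a) = g ^ k"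
    using assms(1) unfolding primitive_element_def by blast
  with \<open>g = 0\<close> assms(2) show False
    by (cases k) auto
qed

text \<open>\<open>D\<close> need not be a subgroup; all that matters is that the sets \<open>c k \<cdot> D\<close>, \<open>k < e\<close>, partition \<open>\<bbbF>\<^sup>*\<close>.\<close>

definition coset_transversal :: "'a::{finite,field} set \<Rightarrow> nat \<Rightarrow> (nat \<Rightarrow> 'a) \<Rightarrow> bool" where
  "coset_transversal D e c \<longleftrightarrow>
     (\<forall>k<e. c k \<noteq> 0) \<and> (\<forall>z. z \<noteq> 0 \<longrightarrow> (\<exists>!k. k < e \<and> z / c k \<in> D))"

lemma cyc_class_transversal:
  fixes g :: "'a::{finite,field}"
  assumes prim: "primitive_element g" and "g \<noteq> 0" and "0 < e"
    and nonzero: "\<forall>k<e. c k \<noteq> 0"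
    and distinct: "\<forall>k<e. \<forall>l<e. k \<noteq> l \<longrightarrow> c l / c k \<notin> cyc_class g e 0"
  shows "coset_transversal (cyc_class g e 0) e c"
proof -
  let ?D = "cyc_class g e 0"
  have "\<forall>k. \<exists>n. k < e \<longrightarrow> c k = g ^ n"
    using prim nonzero unfolding primitive_element_def by blast
  then obtain \<kappa> where \<kappa>: "\<And>k. k < e \<Longrightarrow> c k = g ^ \<kappa> k"
    using choice[of "\<lambda>k n. k < e \<longrightarrow> c k = g ^ n"] by blast
  have "inj_on (\<lambda>k. \<kappa> k mod e) {0..<e}"
  proof (rule inj_onI)
    fix k l assume "k \<in> {0..<e}" "l \<in> {0..<e}" "\<kappa> k mod e = \<kappa> l mod e"
    then have "c l / c k \<in> ?D"
      using power_ratio_in_cyc_class[OF \<open>g \<noteq> 0\<close>] \<kappa> by simp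
    then show "k = l"
      using distinct \<open>k \<in> {0..<e}\<close> \<open>l \<in> {0..<e}\<close> by auto
  qed
  moreover have "(\<lambda>k. \<kappa> k mod e) ` {0..<e} \<subseteq> {0..<e}"
    by auto
  ultimately have residues: "(\<lambda>k. \<kappa> k mod e) ` {0..<e} = {0..<e}"
    by (simp add: endo_inj_surj)
  have "\<exists>!k. k < e \<and> z / c k \<in> ?D" if "z \<noteq> 0" for z
  proof -
    obtain n where n: "z = g ^ n"
      using prim \<open>z \<noteq> 0\<close> unfolding primitive_element_def by blast
    have "n mod e \<in> (\<lambda>k. \<kappa> k mod e) ` {0..<e}"
      using residues \<open>0 < e\<close> by simp
    then obtain k where "k < e" "\<kappa> k mod e = n mod e"
      by auto
    then have "z / c k \<in> ?D"
      using power_ratio_in_cyc_class[OF \<open>g \<noteq> 0\<close>] \<kappa> n by simp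
    moreover have "k' = k" if "k' < e" "z / c k' \<in> ?D" for k'
    proof -
      have "c k / c k' = (z / c k') / (z / c k)"
        using \<open>z \<noteq> 0\<close> nonzero \<open>k < e\<close> \<open>k' < e\<close> by (simp add: field_simps)
      also have "\<dots> \<in> ?D"
        using cyc_class_divide \<open>z / c k \<in> ?D\<close> \<open>z / c k' \<in> ?D\<close> by blast
      finally show ?thesis
        using distinct \<open>k < e\<close> \<open>k' < e\<close> by blast
    qed
    ultimately show ?thesis
      using \<open>k < e\<close> by blast
  qed
  then show ?thesis
    using nonzero by (simp add: coset_transversal_def)
qed

lemma coset_transversal_count:
  assumes "coset_transversal D e c" and "0 \<notin> D"
  shows "(\<Sum>k\<in>{0..<e}. of_bool (z / c k \<in> D)) = (of_bool (z \<noteq> 0) :: int)"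
proof (cases "z = 0")
  case False
  with assms(1) have "\<exists>!k. k < e \<and> z / c k \<in> D"
    by (simp add: coset_transversal_def)
  then obtain k where k: "k < e" "z / c k \<in> D" and unique: "\<forall>l. l < e \<and> z / c l \<in> D \<longrightarrow> l = k"
    by blast
  have "{0..<e} \<inter> {l. z / c l \<in> D} = {k}"
  proof (intro equalityI subsetI)
    fix l assume "l \<in> {0..<e} \<inter> {l. z / c l \<in> D}"
    then have "l < e" "z / c l \<in> D"
      by simp_all
    then show "l \<in> {k}"
      using unique by blast
  qed (use k in simp)
  then show ?thesis
    using False by simp
next
  case True
  then show ?thesis
    using assms(2) by simp
qed

lemma card_coset_transversal:
  fixes D :: "'a::{finite,field} set"
  assumes "coset_transversal D e c" and "0 \<notin> D"
  shows "e * card D = card (UNIV :: 'a set) - 1"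
proof -
  have "{z :: 'a. z \<noteq> 0} = UNIV - {0}"
    by auto
  then have "int (card (UNIV :: 'a set) - 1) = (\<Sum>z\<in>UNIV. of_bool (z \<noteq> (0 :: 'a)))"
    by (simp add: card_Diff_singleton)
  also have "\<dots> = (\<Sum>z\<in>UNIV. \<Sum>k\<in>{0..<e}. of_bool (z / c k \<in> D))"
    using coset_transversal_count[OF assms] by simp
  also have "\<dots> = (\<Sum>k\<in>{0..<e}. \<Sum>z\<in>UNIV. of_bool (0 + inverse (c k) * z \<in> D))"
    by (subst sum.swap) (simp add: divide_inverse mult.commute)
  also have "\<dots> = (\<Sum>k\<in>{0..<e}. int (card D))"
    using assms(1) by (intro sum.cong refl sum_of_bool_affine_in) (simp add: coset_transversal_def)
  finally show ?thesis
    by (simp flip: of_nat_mult)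
qed

definition ratio_block_adj :: "'a::{finite,field} set \<Rightarrow> (nat \<Rightarrow> 'a) \<Rightarrow> nat \<times> 'a \<Rightarrow> nat \<times> 'a \<Rightarrow> int" where
  "ratio_block_adj D c u w = of_bool (snd u - c (fst w) / c (fst u) * snd w \<in> D)"

lemma sum_of_bool_two_steps:
  fixes D :: "'a::{finite,field} set"
  assumes "r \<noteq> 0"
  shows "(\<Sum>z\<in>UNIV. of_bool (x - r * z \<in> D) * of_bool (z - s * y \<in> D))
       = (\<Sum>d\<in>D. of_bool ((x - r * s * y - d) / r \<in> D) :: int)"
proof -
  \<comment> \<open>substitute \<open>d = x - r z\<close> for the middle vertex\<close>
  have "(\<Sum>z\<in>UNIV. of_bool (x - r * z \<in> D) * of_bool (z - s * y \<in> D))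
      = (\<Sum>d\<in>UNIV. of_bool (x - r * (x / r + (- 1 / r) * d) \<in> D)
                    * of_bool (x / r + (- 1 / r) * d - s * y \<in> D) :: int)"
    using assms by (subst sum_UNIV_affine_reindex[symmetric, of "- 1 / r" _ "x / r"]) simp_all
  also have "\<dots> = (\<Sum>d\<in>UNIV. of_bool (d \<in> D) * of_bool ((x - r * s * y - d) / r \<in> D))"
    using assms by (intro sum.cong refl) (simp add: field_simps)
  finally show ?thesis
    by simp
qed

lemma ratio_block_adj_square:
  assumes transversal: "coset_transversal D e c" and "0 \<notin> D" and "i < e" and "j < e"
  shows "(\<Sum>w\<in>{0..<e} \<times> UNIV. ratio_block_adj D c (i, x) w * ratio_block_adj D c w (j, y))
       = int (card D) - ratio_block_adj D c (i, x) (j, y)"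
proof -
  let ?t = "x - c j / c i * y"
  have nonzero: "\<And>k. k < e \<Longrightarrow> c k \<noteq> 0"
    using transversal by (simp add: coset_transversal_def)
  have block: "(\<Sum>z\<in>UNIV. of_bool (x - c k / c i * z \<in> D) * of_bool (z - c j / c k * y \<in> D))
      = (\<Sum>d\<in>D. of_bool ((?t - d) * c i / c k \<in> D) :: int)" if "k < e" for k
  proof -
    have "c k / c i * (c j / c k) = c j / c i"
      using nonzero that by simp
    then show ?thesis
      using sum_of_bool_two_steps[of "c k / c i" x D "c j / c k" y] nonzero that \<open>i < e\<close> by simp
  qed
  have "(\<Sum>w\<in>{0..<e} \<times> UNIV. ratio_block_adj D c (i, x) w * ratio_block_adj D c w (j, y))
      = (\<Sum>k\<in>{0..<e}. \<Sum>z\<in>UNIV. of_bool (x - c k / c i * z \<in> D) * of_bool (z - c j / c k * y \<in> D))"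
    by (simp only: sum.cartesian_product' ratio_block_adj_def fst_conv snd_conv)
  also have "\<dots> = (\<Sum>k\<in>{0..<e}. \<Sum>d\<in>D. of_bool ((?t - d) * c i / c k \<in> D))"
    by (rule sum.cong[OF refl]) (rule block, simp)
  also have "\<dots> = (\<Sum>d\<in>D. of_bool (?t - d \<noteq> 0))"
    using nonzero \<open>i < e\<close>
    by (subst sum.swap) (simp add: coset_transversal_count[OF transversal \<open>0 \<notin> D\<close>])
  also have "\<dots> = (\<Sum>d\<in>D. 1 - of_bool (d = ?t))"
    by (intro sum.cong) auto
  also have "\<dots> = int (card D) - of_bool (?t \<in> D)"
    by (simp add: sum_subtractf)
  finally show ?thesis
    by (simp add: ratio_block_adj_def)
qed

theorem dsrg_ratio_block_adj:
  fixes D :: "'a::{finite,field} set"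
  assumes transversal: "coset_transversal D e c" and "0 \<notin> D"
  defines "n \<equiv> int (card D)"
  shows "dsrg ({0..<e} \<times> UNIV) (ratio_block_adj D c)
           (int e * int (card (UNIV :: 'a set))) (int e * n) n (n - 1) n"
  unfolding dsrg_def
proof (intro conjI ballI)
  let ?V = "{0..<e} \<times> (UNIV :: 'a set)"
  let ?A = "ratio_block_adj D c"
  have nonzero: "\<And>k. k < e \<Longrightarrow> c k \<noteq> 0"
    using transversal by (simp add: coset_transversal_def)
  show "finite ?V" "int (card ?V) = int e * int (card (UNIV :: 'a set))"
    by (simp_all add: card_cartesian_product)
  show "?A u w = 0 \<or> ?A u w = 1" for u w
    by (simp add: ratio_block_adj_def)
  show loopless: "?A u u = 0" if "u \<in> ?V" for u
    using that nonzero \<open>0 \<notin> D\<close> by (auto simp: ratio_block_adj_def)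
  show "(\<Sum>w\<in>?V. ?A u w * ?A w v)
      = n * (if u = v then 1 else 0) + (n - 1) * ?A u v + n * (1 - (if u = v then 1 else 0) - ?A u v)"
    if "u \<in> ?V" "v \<in> ?V" for u v
  proof -
    obtain i x j y where uv: "u = (i, x)" "v = (j, y)"
      by (cases u, cases v) auto
    moreover have "i < e" "j < e"
      using that uv by auto
    ultimately have "(\<Sum>w\<in>?V. ?A u w * ?A w v) = n - ?A u v"
      unfolding n_def by (simp add: ratio_block_adj_square[OF assms(1,2)])
    then show ?thesis
      using loopless \<open>u \<in> ?V\<close> by (cases "u = v") (simp_all add: algebra_simps)
  qed
  show "(\<Sum>w\<in>?V. ?A u w) = int e * n" if "u \<in> ?V" for u
  proof -
    have "(\<Sum>w\<in>?V. ?A u w) = (\<Sum>k\<in>{0..<e}. \<Sum>z\<in>UNIV. of_bool (snd u - c k / c (fst u) * z \<in> D))"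
      by (simp only: sum.cartesian_product' ratio_block_adj_def fst_conv snd_conv)
    also have "\<dots> = (\<Sum>k\<in>{0..<e}. n)"
    proof (rule sum.cong[OF refl])
      fix k assume "k \<in> {0..<e}"
      then have "- (c k / c (fst u)) \<noteq> 0"
        using nonzero \<open>u \<in> ?V\<close> by auto
      from sum_of_bool_affine_in[OF this, of "snd u" D]
      show "(\<Sum>z\<in>UNIV. of_bool (snd u - c k / c (fst u) * z \<in> D)) = n"
        unfolding n_def by simp
    qed
    finally show ?thesis
      by simp
  qed
  show "(\<Sum>w\<in>?V. ?A w v) = int e * n" for v
  proof -
    have "(\<Sum>w\<in>?V. ?A w v) = (\<Sum>k\<in>{0..<e}. \<Sum>z\<in>UNIV. of_bool (z - c (fst v) / c k * snd v \<in> D))"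
      by (simp only: sum.cartesian_product' ratio_block_adj_def fst_conv snd_conv)
    also have "\<dots> = (\<Sum>k\<in>{0..<e}. n)"
    proof (rule sum.cong[OF refl])
      fix k
      from sum_of_bool_affine_in[of 1 "- (c (fst v) / c k * snd v)" D]
      show "(\<Sum>z\<in>UNIV. of_bool (z - c (fst v) / c k * snd v \<in> D)) = n"
        unfolding n_def by simp
    qed
    finally show ?thesis
      by simp
  qed
qed

lemma dsrg_cong:
  assumes "dsrg V A v k t lam mu" and "\<And>x y. x \<in> V \<Longrightarrow> y \<in> V \<Longrightarrow> A x y = B x y"
  shows "dsrg V B v k t lam mu"
proof -
  have "(\<Sum>z\<in>V. A x z * A z y) = (\<Sum>z\<in>V. B x z * B z y)" if "x \<in> V" "y \<in> V" for x y
    using that assms(2) by (intro sum.cong) auto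
  moreover have "(\<Sum>z\<in>V. A x z) = (\<Sum>z\<in>V. B x z)" "(\<Sum>z\<in>V. A z x) = (\<Sum>z\<in>V. B z x)"
    if "x \<in> V" for x
    using that assms(2) by (auto intro: sum.cong)
  ultimately show ?thesis
    using assms unfolding dsrg_def by simp
qed

lemma less_4_cases: "(i::nat) < 4 \<Longrightarrow> i = 0 \<or> i = 1 \<or> i = 2 \<or> i = 3"
  by arith

lemma Mmat_eq_ratio:
  assumes "a * a = -1" and "b = - a" and "i < 4" and "j < 4"
  shows "Mmat a b i j = [1, -1, a, b] ! j / [1, -1, a, b] ! i"
proof -
  have products: "a * b = 1" "b * a = 1" "b * b = -1" "- a = b" "- b = a" "a \<noteq> 0" "b \<noteq> 0"
    using assms(1,2) by auto
  then have "inverse a = b" "inverse b = a"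
    by (simp_all add: inverse_unique)
  with products assms(1) show ?thesis
    using less_4_cases[OF assms(3)] less_4_cases[OF assms(4)]
    by (elim disjE) (simp_all add: Mmat_def divide_inverse)
qed

lemma Mmat_off_diagonal:
  assumes "i < 4" and "j < 4" and "i \<noteq> j"
  shows "Mmat a b i j \<in> {-1, a, b}"
  using less_4_cases[OF assms(1)] less_4_cases[OF assms(2)] assms(3) by (auto simp: Mmat_def)

lemma block_adj_eq_ratio_block_adj:
  assumes "a * a = -1" and "b = - a" and "u \<in> {0..<4} \<times> UNIV" and "w \<in> {0..<4} \<times> UNIV"
  shows "block_adj g a b u w = ratio_block_adj (cyc_class g 4 0) ((!) [1, -1, a, b]) u w"
  using assms Mmat_eq_ratio[OF assms(1,2), of "fst u" "fst w"]
  by (simp add: ratio_block_adj_def block_adj_def Cmat_def mem_Times_iff)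

lemma coset_transversal_fourth_roots_of_unity:
  fixes g a :: "'a::{finite,field}"
  assumes "primitive_element g" and "g \<noteq> 0" and "- 1 \<notin> cyc_class g 4 0"
    and "a * a = -1" and "b = - a"
  shows "coset_transversal (cyc_class g 4 0) 4 ((!) [1, -1, a, b])"
proof -
  let ?D = "cyc_class g 4 0"
  let ?c = "(!) [1, -1, a, b]"
  have "b * b = -1"
    using assms(4,5) by simp
  then have "a \<notin> ?D" "b \<notin> ?D"
    using assms(3,4) cyc_class_mult[of a g 4 a] cyc_class_mult[of b g 4 b] by auto
  show ?thesis
  proof (rule cyc_class_transversal[OF assms(1,2)])
    show "\<forall>k<4. ?c k \<noteq> 0"
    proof (intro allI impI)
      fix k :: nat assume "k < 4"
      moreover have "a \<noteq> 0" "b \<noteq> 0"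
        using assms(4) \<open>b * b = -1\<close> by auto
      ultimately show "?c k \<noteq> 0"
        using less_4_cases[of k] by auto
    qed
    show "\<forall>k<4. \<forall>l<4. k \<noteq> l \<longrightarrow> ?c l / ?c k \<notin> ?D"
    proof (intro allI impI)
      fix k l :: nat assume "k < 4" "l < 4" "k \<noteq> l"
      then have "?c l / ?c k \<in> {-1, a, b}"
        using Mmat_off_diagonal[of k l a b] Mmat_eq_ratio[OF assms(4,5), of k l] by simp
      then show "?c l / ?c k \<notin> ?D"
        using assms(3) \<open>a \<notin> ?D\<close> \<open>b \<notin> ?D\<close> by auto
    qed
  qed simp
qed

theorem mainTheorem10:
  fixes \<gamma> a b :: "'a::{finite,field}" and m :: nat
  assumes "primitive_element \<gamma>"
    and "card (UNIV :: 'a set) = 4 * m + 1"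
    and "- 1 \<notin> cyc_class \<gamma> 4 0"
    and "a ^ 2 = - 1" and "b ^ 2 = - 1" and "a \<noteq> b"
  shows "dsrg ({0..<4} \<times> UNIV) (block_adj \<gamma> a b)
           (4 * (4 * int m + 1)) (4 * int m) (int m) (int m - 1) (int m)"
proof -
  let ?D = "cyc_class \<gamma> 4 0"
  have "b = - a"
    using assms(4-6) power2_eq_iff[of b a] by simp
  have "a * a = -1"
    using assms(4) by (simp add: power2_eq_square)
  have "(-1::'a) \<noteq> 1"
    using assms(3) one_in_cyc_class[of \<gamma> 4] by metis
  then have "\<gamma> \<noteq> 0"
    by (rule primitive_element_nonzero[OF assms(1)])
  then have transversal: "coset_transversal ?D 4 ((!) [1, -1, a, b])" and "0 \<notin> ?D"
    using coset_transversal_fourth_roots_of_unity[OF assms(1) _ assms(3) \<open>a * a = -1\<close> \<open>b = - a\<close>]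
      zero_notin_cyc_class by blast+
  have "card ?D = m"
    using card_coset_transversal[OF transversal \<open>0 \<notin> ?D\<close>] assms(2) by simp
  then have "dsrg ({0..<4} \<times> UNIV) (ratio_block_adj ?D ((!) [1, -1, a, b]))
      (4 * (4 * int m + 1)) (4 * int m) (int m) (int m - 1) (int m)"
    using dsrg_ratio_block_adj[OF transversal \<open>0 \<notin> ?D\<close>] assms(2) by (simp add: add.commute)
  then show ?thesis
    by (rule dsrg_cong) (simp add: block_adj_eq_ratio_block_adj[OF \<open>a * a = -1\<close> \<open>b = - a\<close>])
qed

end
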